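(* Let $(\Omega,\mathcal F,\mathbb P)$ be a probability space, let $\mathfrak d,N\in\mathbb N$, let $\|\cdot\|$ be a norm on $\mathbb R^{\mathfrak d}$, let $\mathfrak H\subseteq\mathbb R^{\mathfrak d}$ be a set, let $\vartheta\in\mathfrak H$, $L,\varepsilon\in(0,\infty)$, let $\mathfrak E\colon\mathfrak H\times\Omega\to\mathbb R$ be $(\mathcal B(\mathfrak H)\otimes\mathcal F)/\mathcal B(\mathbb R)$-measurable with $|\mathfrak E(x,\omega)-\mathfrak E(y,\omega)|\le L\|x-y\|$ for all $x,y\in\mathfrak H$, $\omega\in\Omega$, and let $\Theta_n\colon\Omega\to\mathfrak H$, $n\in\{1,\dots,N\}$, be i.i.d. random variables. Then, writing $\mathfrak E(\Theta_n)$ for $\omega\mapsto\mathfrak E(\Theta_n(\omega),\omega)$ and $\mathfrak E(\vartheta)$ for $\omega\mapsto\mathfrak E(\vartheta,\omega)$, $$\mathbb P\Bigl(\bigl[\min_{n\in\{1,\dots,N\}}\mathfrak E(\Theta_n)\bigr]-\mathfrak E(\vartheta)>\varepsilon\Bigr)\le\Bigl[\mathbb P\bigl(\|\Theta_1-\vartheta\|>\tfrac{\varepsilon}L\bigr)\Bigr]^N\le\exp\Bigl(-N\,\mathbb P\bigl(\|\Theta_1-\vartheta\|\le\tfrac{\varepsilon}L\bigr)\Bigr).$$ *)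

theory Defs
  imports "HOL-Probability.Probability"
begin

definition is_norm_on :: "(real ^ 'd \<Rightarrow> real) \<Rightarrow> bool" where
  "is_norm_on nrm \<longleftrightarrow>
     (\<forall>x. nrm x = 0 \<longleftrightarrow> x = 0) \<and>
     (\<forall>x y. nrm (x + y) \<le> nrm x + nrm y) \<and>
     (\<forall>c x. nrm (c *\<^sub>R x) = \<bar>c\<bar> * nrm x)"

end

theory Submission
  imports Defs
begin

text \<open>On the event in question every \<open>\<Theta>\<^sub>n\<close> is an \<open>\<epsilon>/L\<close>-far sample: by the Lipschitz bound,
  \<open>\<epsilon> < E(\<Theta>\<^sub>n) - E(\<vartheta>) \<le> L \<parallel>\<Theta>\<^sub>n - \<vartheta>\<parallel>\<close> for each \<open>n\<close>. Independence and identical distribution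
  turn the probability that all \<open>N\<close> samples are far into the \<open>N\<close>-th power of the probability that
  one is, and \<open>p \<le> exp (p - 1)\<close> gives the exponential bound.\<close>

lemma is_norm_on_convex:
  fixes nrm :: "real ^ 'd \<Rightarrow> real"
  assumes "is_norm_on nrm"
  shows "convex_on UNIV nrm"
proof (rule convex_onI)
  fix t :: real and x y :: "real ^ 'd"
  assume "0 < t" "t < 1"
  have "nrm ((1 - t) *\<^sub>R x + t *\<^sub>R y) \<le> nrm ((1 - t) *\<^sub>R x) + nrm (t *\<^sub>R y)"
    using assms unfolding is_norm_on_def by blast
  also have "\<dots> = (1 - t) * nrm x + t * nrm y"
    using assms \<open>0 < t\<close> \<open>t < 1\<close> unfolding is_norm_on_def by simp
  finally show "nrm ((1 - t) *\<^sub>R x + t *\<^sub>R y) \<le> (1 - t) * nrm x + t * nrm y" .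
qed simp

lemma is_norm_on_continuous:
  assumes "is_norm_on nrm"
  shows "continuous_on UNIV nrm"
  by (rule convex_on_continuous[OF open_UNIV is_norm_on_convex[OF assms]])

lemma power_le_exp_neg_complement:
  fixes p :: real
  assumes "0 \<le> p"
  shows "p ^ n \<le> exp (- real n * (1 - p))"
proof -
  have "p ^ n \<le> exp (p - 1) ^ n"
    using assms exp_ge_add_one_self[of "p - 1"] by (intro power_mono) auto
  also have "\<dots> = exp (- real n * (1 - p))"
    by (simp add: exp_of_nat_mult[symmetric] algebra_simps)
  finally show ?thesis .
qed

lemma (in prob_space) prob_all_iid_eq_power:
  assumes indep: "indep_vars (\<lambda>_. M') X I"
    and "finite I" "j \<in> I"
    and distr_eq: "\<And>i. i \<in> I \<Longrightarrow> distr M M' (X i) = distr M M' (X j)"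
    and S: "{x \<in> space M'. P x} \<in> sets M'"
  shows "prob {\<omega> \<in> space M. \<forall>i\<in>I. P (X i \<omega>)} = prob {\<omega> \<in> space M. P (X j \<omega>)} ^ card I"
proof -
  let ?S = "{x \<in> space M'. P x}"
  have X: "X i \<in> measurable M M'" if "i \<in> I" for i
    using indep that unfolding indep_vars_def2 by blast
  have preimage: "X i -` ?S \<inter> space M = {\<omega> \<in> space M. P (X i \<omega>)}" if "i \<in> I" for i
    using measurable_space[OF X[OF that]] by auto
  have "prob {\<omega> \<in> space M. \<forall>i\<in>I. P (X i \<omega>)} = prob (\<Inter>i\<in>I. X i -` ?S \<inter> space M)"
    using preimage \<open>j \<in> I\<close> by (intro arg_cong[where f = prob]) auto
  also have "\<dots> = (\<Prod>i\<in>I. prob (X i -` ?S \<inter> space M))"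
    using indep S \<open>finite I\<close> \<open>j \<in> I\<close> unfolding indep_vars_def2
    by (intro indep_setsD) blast+
  also have "\<dots> = (\<Prod>i\<in>I. prob (X j -` ?S \<inter> space M))"
  proof (rule prod.cong[OF refl])
    fix i assume "i \<in> I"
    have "prob (X i -` ?S \<inter> space M) = measure (distr M M' (X i)) ?S"
      using X[OF \<open>i \<in> I\<close>] S by (simp add: measure_distr)
    also have "\<dots> = prob (X j -` ?S \<inter> space M)"
      using distr_eq[OF \<open>i \<in> I\<close>] X[OF \<open>j \<in> I\<close>] S by (simp add: measure_distr)
    finally show "prob (X i -` ?S \<inter> space M) = prob (X j -` ?S \<inter> space M)" .
  qed
  finally show ?thesis
    using preimage[OF \<open>j \<in> I\<close>] by simp
qed

lemma Min_excess_imp_div_less: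
  fixes f :: "'i \<Rightarrow> real"
  assumes "finite I" "n \<in> I" "L > 0"
    and "f n - c \<le> L * r"
    and "(MIN i\<in>I. f i) - c > \<epsilon>"
  shows "\<epsilon> / L < r"
proof -
  have "(MIN i\<in>I. f i) \<le> f n"
    using assms(1,2) by simp
  then have "\<epsilon> < f n - c"
    using assms(5) by linarith
  also have "\<dots> \<le> L * r"
    by fact
  finally show ?thesis
    using \<open>L > 0\<close> by (simp add: pos_divide_less_eq mult.commute)
qed

theorem lemma3p22:
  fixes M :: "'w measure"
    and nrm :: "real ^ 'd \<Rightarrow> real"
    and H :: "(real ^ 'd) set"
    and \<theta>0 :: "real ^ 'd"
    and L \<epsilon> :: real
    and N :: nat
    and E :: "real ^ 'd \<Rightarrow> 'w \<Rightarrow> real"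
    and \<Theta> :: "nat \<Rightarrow> 'w \<Rightarrow> real ^ 'd"
  assumes "prob_space M"
    and "N \<ge> 1"
    and "is_norm_on nrm"
    and "\<theta>0 \<in> H"
    and "L > 0" and "\<epsilon> > 0"
    and "(\<lambda>(x, \<omega>). E x \<omega>) \<in> borel_measurable (restrict_space borel H \<Otimes>\<^sub>M M)"
    and "\<And>x y \<omega>. x \<in> H \<Longrightarrow> y \<in> H \<Longrightarrow> \<omega> \<in> space M \<Longrightarrow>
           \<bar>E x \<omega> - E y \<omega>\<bar> \<le> L * nrm (x - y)"
    and "\<And>n. n \<in> {1..N} \<Longrightarrow> \<Theta> n \<in> measurable M (restrict_space borel H)"
    and "prob_space.indep_vars M (\<lambda>_. restrict_space borel H) \<Theta> {1..N}"
    and "\<And>n. n \<in> {1..N} \<Longrightarrow>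
           distr M (restrict_space borel H) (\<Theta> n) = distr M (restrict_space borel H) (\<Theta> 1)"
  shows "measure M {\<omega> \<in> space M. (MIN n\<in>{1..N}. E (\<Theta> n \<omega>) \<omega>) - E \<theta>0 \<omega> > \<epsilon>}
           \<le> (measure M {\<omega> \<in> space M. nrm (\<Theta> 1 \<omega> - \<theta>0) > \<epsilon> / L}) ^ N
       \<and> (measure M {\<omega> \<in> space M. nrm (\<Theta> 1 \<omega> - \<theta>0) > \<epsilon> / L}) ^ N
           \<le> exp (- real N * measure M {\<omega> \<in> space M. nrm (\<Theta> 1 \<omega> - \<theta>0) \<le> \<epsilon> / L})"
proof -
  interpret prob_space M by fact
  define far where "far x \<longleftrightarrow> \<epsilon> / L < nrm (x - \<theta>0)" for x
  have "open {x. far x}"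
    unfolding far_def
    by (intro open_Collect_less continuous_intros
        continuous_on_compose2[OF is_norm_on_continuous[OF assms(3)]]) auto
  then have far_measurable: "{x \<in> space (restrict_space borel H). far x} \<in> sets (restrict_space borel H)"
    by (auto simp: space_restrict_space sets_restrict_space)
  have far_event: "{\<omega> \<in> space M. far (\<Theta> n \<omega>)} \<in> events" if "n \<in> {1..N}" for n
    using pred_sets1[OF far_measurable assms(9)[OF that]] by (simp add: Measurable.pred_def)
  have in_H: "\<Theta> n \<omega> \<in> H" if "n \<in> {1..N}" "\<omega> \<in> space M" for n \<omega>
    using measurable_space[OF assms(9)[OF that(1)] that(2)] by (simp add: space_restrict_space)
  have "{\<omega> \<in> space M. (MIN n\<in>{1..N}. E (\<Theta> n \<omega>) \<omega>) - E \<theta>0 \<omega> > \<epsilon>}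
          \<subseteq> {\<omega> \<in> space M. \<forall>n\<in>{1..N}. far (\<Theta> n \<omega>)}"
    unfolding far_def using assms(4,5) in_H abs_le_D1[OF assms(8)]
    by (auto intro!: Min_excess_imp_div_less[where I = "{1..N}"])
  \<comment> \<open>The event need not be measurable:
    \<open>measure\<close> vanishes on non-events.\<close>
  then have "prob {\<omega> \<in> space M. (MIN n\<in>{1..N}. E (\<Theta> n \<omega>) \<omega>) - E \<theta>0 \<omega> > \<epsilon>}
               \<le> prob {\<omega> \<in> space M. \<forall>n\<in>{1..N}. far (\<Theta> n \<omega>)}"
    using far_event by (intro finite_measure_mono sets.sets_Collect_finite_All) auto
  also have "\<dots> = prob {\<omega> \<in> space M. far (\<Theta> 1 \<omega>)} ^ N"
    using prob_all_iid_eq_power[OF assms(10) _ _ assms(11) far_measurable] assms(2) by simp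
  finally have first: "prob {\<omega> \<in> space M. (MIN n\<in>{1..N}. E (\<Theta> n \<omega>) \<omega>) - E \<theta>0 \<omega> > \<epsilon>}
                         \<le> prob {\<omega> \<in> space M. far (\<Theta> 1 \<omega>)} ^ N" .
  have "prob {\<omega> \<in> space M. \<not> far (\<Theta> 1 \<omega>)} = 1 - prob {\<omega> \<in> space M. far (\<Theta> 1 \<omega>)}"
    using far_event[of 1] assms(2) by (intro prob_neg) (auto simp: Measurable.pred_def)
  then show ?thesis
    using first power_le_exp_neg_complement[of "prob {\<omega> \<in> space M. far (\<Theta> 1 \<omega>)}" N]
    by (simp add: far_def not_less)
qed

end
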